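(* Let $K \subsetneq L$ be an extension of fields such that $K$ is relatively algebraically closed in $L$ (every element of $L$ algebraic over $K$ lies in $K$). Let $W$ be the set of intermediate fields $F$ with $K \subset F \subset L$ such that $L$ has transcendence degree $1$ over $F$ and $F$ is relatively algebraically closed in $L$. Then $\bigcap_{F \in W} F = K$. *)

theory Defs
  imports "HOL-Algebra.Algebra"
begin

definition rel_alg_closed :: "('a, 'b) ring_scheme \<Rightarrow> 'a set \<Rightarrow> bool" where
  "rel_alg_closed L F \<longleftrightarrow> (\<forall>x \<in> carrier L. ring.algebraic L F x \<longrightarrow> x \<in> F)"

definition trdeg_one :: "('a, 'b) ring_scheme \<Rightarrow> 'a set \<Rightarrow> bool" where
  "trdeg_one L F \<longleftrightarrow>
     (\<exists>t \<in> carrier L. ring.transcendental L F t \<and>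
        (\<forall>x \<in> carrier L. ring.algebraic L (generate_field L (insert t F)) x))"

end

theory Submission
  imports Defs
begin

(* Let x be an element of L outside K; since K is relatively algebraically closed, x is
   transcendental over K. By Zorn's lemma there is a subfield M containing K that is maximal
   with x transcendental over M, so x is algebraic over M(y) for every y outside M.
   Then M is relatively algebraically closed: an element y outside M algebraic over M would
   make x algebraic over the algebraic extension M(y), hence over M. And {x} is a transcendence
   basis of L over M by the exchange property: if x is transcendental over M but algebraic over
   M(z), then z is algebraic over M(x). Hence M belongs to W and does not contain x. *)

lemma (in abelian_monoid) finsum_swap:
  assumes "finite A" "finite B" "\<And>a b. a \<in> A \<Longrightarrow> b \<in> B \<Longrightarrow> g a b \<in> carrier G"
  shows "(\<Oplus>a\<in>A. \<Oplus>b\<in>B. g a b) = (\<Oplus>b\<in>B. \<Oplus>a\<in>A. g a b)"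
  using assms(1,3)
proof (induction A rule: finite_induct)
  case empty
  then show ?case by (simp add: finsum_zero)
next
  case (insert a A)
  have "(\<Oplus>a'\<in>insert a A. \<Oplus>b\<in>B. g a' b) = (\<Oplus>b\<in>B. g a b) \<oplus> (\<Oplus>b\<in>B. \<Oplus>a'\<in>A. g a' b)"
    using insert by (simp add: Pi_def finsum_closed)
  also have "\<dots> = (\<Oplus>b\<in>B. g a b \<oplus> (\<Oplus>a'\<in>A. g a' b))"
    using insert.prems by (intro finsum_addf[symmetric]) (auto simp: Pi_def finsum_closed)
  also have "\<dots> = (\<Oplus>b\<in>B. \<Oplus>a'\<in>insert a A. g a' b)"
    using insert by (intro finsum_cong') (auto simp: Pi_def finsum_closed)
  finally show ?case .
qed

lemma (in cring) finsum_bivariate_swap: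
  fixes n m :: nat
  assumes e: "\<And>k j. e k j \<in> carrier R" and x: "x \<in> carrier R" and z: "z \<in> carrier R"
  shows "(\<Oplus>k\<in>{..<n}. (\<Oplus>j\<in>{..<m}. e k j \<otimes> z [^] j) \<otimes> x [^] k)
       = (\<Oplus>j\<in>{..<m}. (\<Oplus>k\<in>{..<n}. e k j \<otimes> x [^] k) \<otimes> z [^] j)"
proof -
  have "(\<Oplus>k\<in>{..<n}. (\<Oplus>j\<in>{..<m}. e k j \<otimes> z [^] j) \<otimes> x [^] k)
      = (\<Oplus>k\<in>{..<n}. \<Oplus>j\<in>{..<m}. (e k j \<otimes> z [^] j) \<otimes> x [^] k)"
    using e x z by (intro finsum_cong') (auto simp: Pi_def finsum_ldistr intro!: finsum_closed)
  also have "\<dots> = (\<Oplus>j\<in>{..<m}. \<Oplus>k\<in>{..<n}. (e k j \<otimes> x [^] k) \<otimes> z [^] j)"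
    using e x z by (subst finsum_swap) (auto simp: m_ac intro!: finsum_cong')
  also have "\<dots> = (\<Oplus>j\<in>{..<m}. (\<Oplus>k\<in>{..<n}. e k j \<otimes> x [^] k) \<otimes> z [^] j)"
    using e x z by (intro finsum_cong') (auto simp: Pi_def finsum_ldistr intro!: finsum_closed)
  finally show ?thesis .
qed

lemma (in ring) eval_eq_finsum_coeff_length:
  assumes "set p \<subseteq> carrier R" "x \<in> carrier R"
  shows "eval p x = (\<Oplus>k\<in>{..<length p}. coeff p k \<otimes> x [^] k)"
  using assms(1)
proof (induction p)
  case Nil
  then show ?case by simp
next
  case (Cons a p)
  have "(\<Oplus>k\<in>{..<length p}. coeff (a # p) k \<otimes> x [^] k) = (\<Oplus>k\<in>{..<length p}. coeff p k \<otimes> x [^] k)"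
    using Cons.prems assms(2) by (intro finsum_cong') auto
  with Cons show ?case
    using assms(2) by (simp add: lessThan_Suc finsum_insert Pi_def)
qed

lemma (in ring) eval_eq_finsum_coeff:
  assumes "set p \<subseteq> carrier R" "x \<in> carrier R" "length p \<le> n"
  shows "eval p x = (\<Oplus>k\<in>{..<n}. coeff p k \<otimes> x [^] k)"
  unfolding eval_eq_finsum_coeff_length[OF assms(1,2)]
proof (rule add.finprod_mono_neutral_cong_left)
  show "coeff p k \<otimes> x [^] k = \<zero>" if "k \<in> {..<n} - {..<length p}" for k
    using that assms(2) coeff_length[of p k] by simp
  show "(\<lambda>k. coeff p k \<otimes> x [^] k) \<in> {..<n} \<rightarrow> carrier R"
    using assms(1,2) by simp
qed (use assms(3) in auto)

lemma (in ring) eval_rev_map_upt: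
  assumes "c ` {..<n} \<subseteq> carrier R" "x \<in> carrier R"
  shows "eval (rev (map c [0..<n])) x = (\<Oplus>k\<in>{..<n}. c k \<otimes> x [^] k)"
  using assms(1)
proof (induction n)
  case 0
  then show ?case by simp
next
  case (Suc n)
  have c: "c ` {..<n} \<subseteq> carrier R" "c n \<in> carrier R" using Suc.prems by auto
  have "eval (rev (map c [0..<Suc n])) x = c n \<otimes> x [^] n \<oplus> eval (rev (map c [0..<n])) x"
    by simp
  also have "\<dots> = (\<Oplus>k\<in>insert n {..<n}. c k \<otimes> x [^] k)"
    using Suc.IH c assms(2) by (subst finsum_insert) (auto simp: image_subset_iff)
  finally show ?case by (simp add: lessThan_Suc)
qed

lemma (in ring) coeff_in_subring:
  assumes "subring K R" "set p \<subseteq> K" shows "coeff p k \<in> K"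
proof -
  have "coeff p k \<in> set p \<union> {\<zero>}" using coeff_img(3)[of p] by blast
  then show ?thesis using assms(2) subringE(2)[OF assms(1)] by auto
qed

lemma (in ring) finsum_powers_in_subring:
  fixes n :: nat
  assumes S: "subring S R" and c: "c ` {..<n} \<subseteq> S" and x: "x \<in> S"
  shows "(\<Oplus>k\<in>{..<n}. c k \<otimes> x [^] k) \<in> S"
proof -
  have "set (rev (map c [0..<n])) \<subseteq> S" using c by auto
  then have "eval (rev (map c [0..<n])) x \<in> S"
    using ring.eval_in_carrier[OF subring_is_ring[OF S], of _ x] x S by simp
  moreover have "c ` {..<n} \<subseteq> carrier R" "x \<in> carrier R" using c x subringE(1)[OF S] by auto
  ultimately show ?thesis using eval_rev_map_upt by simp
qed

lemma (in domain) algebraic_iff_finsum: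
  assumes K: "subring K R" and x: "x \<in> carrier R"
  shows "algebraic K x \<longleftrightarrow>
    (\<exists>(n::nat) c. c ` {..<n} \<subseteq> K \<and> (\<exists>k<n. c k \<noteq> \<zero>) \<and> (\<Oplus>k\<in>{..<n}. c k \<otimes> x [^] k) = \<zero>)"
proof
  assume "algebraic K x"
  then obtain p where p: "p \<in> carrier (K[X])" "p \<noteq> []" "eval p x = \<zero>"
    using algebraicE[OF K x] unfolding over_def by blast
  have pol: "polynomial K p" using p(1) univ_poly_carrier by blast
  have pK: "set p \<subseteq> K" using polynomial_incl[OF pol] .
  have "coeff p ` {..<length p} \<subseteq> K" using coeff_img_restrict[of p] pK by simp
  moreover have "\<exists>k<length p. coeff p k \<noteq> \<zero>"
    using lead_coeff_simp[OF p(2)] pol p(2) unfolding polynomial_def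
    by (intro exI[of _ "degree p"]) auto
  moreover have "(\<Oplus>k\<in>{..<length p}. coeff p k \<otimes> x [^] k) = \<zero>"
    using eval_eq_finsum_coeff_length[of p x] pK subringE(1)[OF K] x p(3) by auto
  ultimately show "\<exists>(n::nat) c. c ` {..<n} \<subseteq> K \<and> (\<exists>k<n. c k \<noteq> \<zero>) \<and> (\<Oplus>k\<in>{..<n}. c k \<otimes> x [^] k) = \<zero>"
    by (intro exI[of _ "length p"] exI[of _ "coeff p"]) simp
next
  assume "\<exists>(n::nat) c. c ` {..<n} \<subseteq> K \<and> (\<exists>k<n. c k \<noteq> \<zero>) \<and> (\<Oplus>k\<in>{..<n}. c k \<otimes> x [^] k) = \<zero>"
  then obtain n :: nat and c k where c: "c ` {..<n} \<subseteq> K" "k < n" "c k \<noteq> \<zero>" "(\<Oplus>k\<in>{..<n}. c k \<otimes> x [^] k) = \<zero>"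
    by blast
  define p where "p = rev (map c [0..<n])"
  have pK: "set p \<subseteq> K" using c(1) unfolding p_def by auto
  have pR: "set p \<subseteq> carrier R" using pK subringE(1)[OF K] by blast
  have "normalize p \<in> carrier (K[X])"
    using normalize_gives_polynomial[OF pK] univ_poly_carrier by blast
  moreover have "eval (normalize p) x = \<zero>"
    using eval_normalize[OF pR x] eval_rev_map_upt[of c n x] c(1,4) subringE(1)[OF K] x
    unfolding p_def by fastforce
  moreover have "normalize p \<noteq> []"
  proof
    assume "normalize p = []"
    then have "p = replicate n \<zero>" using normalize_def'(1)[of p] unfolding p_def by simp
    moreover have "c k \<in> set p" using c(2) unfolding p_def by simp
    ultimately show False using c(3) by simp
  qed
  ultimately show "algebraic K x"
    using algebraicI unfolding over_def by blast
qed

lemma (in domain) algebraic_of_bivariate_relation: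
  fixes n m :: nat
  assumes M: "subring M R" and S: "subring S R" "M \<subseteq> S" "x \<in> S"
    and tr: "transcendental M x" and z: "z \<in> carrier R"
    and e: "\<And>k j. e k j \<in> M"
    and rel: "(\<Oplus>k\<in>{..<n}. (\<Oplus>j\<in>{..<m}. e k j \<otimes> z [^] j) \<otimes> x [^] k) = \<zero>"
    and k0: "k0 < n" "(\<Oplus>j\<in>{..<m}. e k0 j \<otimes> z [^] j) \<noteq> \<zero>"
  shows "algebraic S z"
proof -
  have xc: "x \<in> carrier R" using S(1,3) subringE(1) by blast
  have ec: "e k j \<in> carrier R" for k j using e subringE(1)[OF M] by blast
  define f where "f j = (\<Oplus>k\<in>{..<n}. e k j \<otimes> x [^] k)" for j
  have "(\<Oplus>j\<in>{..<m}. f j \<otimes> z [^] j) = (\<Oplus>k\<in>{..<n}. (\<Oplus>j\<in>{..<m}. e k j \<otimes> z [^] j) \<otimes> x [^] k)"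
    unfolding f_def by (rule finsum_bivariate_swap[OF ec xc z, symmetric])
  then have f_rel: "(\<Oplus>j\<in>{..<m}. f j \<otimes> z [^] j) = \<zero>" using rel by simp
  have "\<exists>j0<m. e k0 j0 \<noteq> \<zero>"
  proof (rule ccontr)
    assume "\<not> ?thesis"
    then have "(\<Oplus>j\<in>{..<m}. e k0 j \<otimes> z [^] j) = (\<Oplus>j\<in>{..<m}. \<zero>)"
      using z by (intro finsum_cong') auto
    then show False using k0(2) by (simp add: finsum_zero)
  qed
  then obtain j0 where j0: "j0 < m" "e k0 j0 \<noteq> \<zero>" by blast
  have "f j0 \<noteq> \<zero>"
  proof
    assume "f j0 = \<zero>"
    then have "algebraic M x"
      unfolding algebraic_iff_finsum[OF M xc] using e j0 k0(1)
      by (intro exI[of _ n] exI[of _ "\<lambda>k. e k j0"]) (auto simp: f_def)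
    then show False using tr by blast
  qed
  moreover have "f j \<in> S" for j
  proof -
    have "(\<lambda>k. e k j) ` {..<n} \<subseteq> S" using e S(2) by blast
    then show ?thesis unfolding f_def by (rule finsum_powers_in_subring[OF S(1) _ S(3)])
  qed
  ultimately show ?thesis
    unfolding algebraic_iff_finsum[OF S(1) z] using f_rel j0(1)
    by (intro exI[of _ m] exI[of _ f]) auto
qed

definition (in ring) fractions :: "'a set \<Rightarrow> 'a set" where
  "fractions S = {s \<in> carrier R. \<exists>b \<in> S - {\<zero>}. b \<otimes> s \<in> S}"

lemma (in ring) fractionsI:
  "\<lbrakk> s \<in> carrier R; b \<in> S; b \<noteq> \<zero>; b \<otimes> s \<in> S \<rbrakk> \<Longrightarrow> s \<in> fractions S"
  unfolding fractions_def by blast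

lemma (in domain) subset_fractions:
  assumes S: "subring S R" shows "S \<subseteq> fractions S"
proof
  fix s assume "s \<in> S"
  then show "s \<in> fractions S"
    using subringE(1,3)[OF S] by (intro fractionsI[of s \<one>]) auto
qed

lemma (in field) subfield_fractions:
  assumes S: "subring S R" shows "subfield (fractions S) R"
proof (rule subfieldI'[OF subringI])
  show "fractions S \<subseteq> carrier R" by (auto simp: fractions_def)
  show "\<one> \<in> fractions S" using subset_fractions[OF S] subringE(3)[OF S] by blast
next
  fix h assume "h \<in> fractions S"
  then obtain b where h: "h \<in> carrier R" "b \<in> S" "b \<noteq> \<zero>" "b \<otimes> h \<in> S"
    by (auto simp: fractions_def)
  have "b \<otimes> (\<ominus> h) = \<ominus> (b \<otimes> h)" using h(1,2) subringE(1)[OF S] by (auto simp: r_minus)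
  then show "\<ominus> h \<in> fractions S"
    using h subringE(5)[OF S h(4)] by (intro fractionsI[of _ b]) auto
next
  fix h1 h2 assume "h1 \<in> fractions S" "h2 \<in> fractions S"
  then obtain b1 b2 where h: "h1 \<in> carrier R" "b1 \<in> S" "b1 \<noteq> \<zero>" "b1 \<otimes> h1 \<in> S"
      "h2 \<in> carrier R" "b2 \<in> S" "b2 \<noteq> \<zero>" "b2 \<otimes> h2 \<in> S"
    by (auto simp: fractions_def)
  have b: "b1 \<in> carrier R" "b2 \<in> carrier R" using h(2,6) subringE(1)[OF S] by auto
  have bb: "b1 \<otimes> b2 \<in> S - {\<zero>}" using subringE(6)[OF S h(2,6)] integral_iff b h(3,7) by auto
  have "(b1 \<otimes> b2) \<otimes> (h1 \<otimes> h2) = (b1 \<otimes> h1) \<otimes> (b2 \<otimes> h2)"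
    using b h(1,5) by (simp add: m_ac)
  then show "h1 \<otimes> h2 \<in> fractions S"
    using subringE(6)[OF S h(4,8)] h(1,5) bb by (intro fractionsI[of _ "b1 \<otimes> b2"]) auto
  have "(b1 \<otimes> b2) \<otimes> (h1 \<oplus> h2) = b2 \<otimes> (b1 \<otimes> h1) \<oplus> b1 \<otimes> (b2 \<otimes> h2)"
    using b h(1,5) by (simp add: m_ac r_distr)
  moreover have "b2 \<otimes> (b1 \<otimes> h1) \<oplus> b1 \<otimes> (b2 \<otimes> h2) \<in> S"
    using subringE(6,7)[OF S] h by blast
  ultimately show "h1 \<oplus> h2 \<in> fractions S"
    using h(1,5) bb by (intro fractionsI[of _ "b1 \<otimes> b2"]) auto
next
  fix h assume "h \<in> fractions S - {\<zero>}"
  then obtain b where h: "h \<in> carrier R" "h \<noteq> \<zero>" "b \<in> S" "b \<noteq> \<zero>" "b \<otimes> h \<in> S"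
    by (auto simp: fractions_def)
  have b: "b \<in> carrier R" using h(3) subringE(1)[OF S] by auto
  have "inv h \<in> carrier R" "h \<otimes> inv h = \<one>" using h(1,2) field_Units by auto
  then have "(b \<otimes> h) \<otimes> inv h = b" using b h(1) by (simp add: m_assoc)
  moreover have "b \<otimes> h \<noteq> \<zero>" using integral_iff b h by auto
  ultimately show "inv h \<in> fractions S"
    using \<open>inv h \<in> carrier R\<close> h(3,5) by (intro fractionsI[of _ "b \<otimes> h"]) auto
qed

lemma (in domain) common_denominator:
  assumes S: "subring S R" and "finite A" "A \<subseteq> fractions S"
  shows "\<exists>b \<in> S - {\<zero>}. \<forall>a \<in> A. b \<otimes> a \<in> S"
  using assms(2,3)
proof (induction A rule: finite_induct)
  case empty
  show ?case using subringE(3)[OF S] by auto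
next
  case (insert a A)
  obtain b where b: "b \<in> S" "b \<noteq> \<zero>" "\<forall>a' \<in> A. b \<otimes> a' \<in> S"
    using insert by auto
  obtain c where c: "a \<in> carrier R" "c \<in> S" "c \<noteq> \<zero>" "c \<otimes> a \<in> S"
    using insert.prems by (auto simp: fractions_def)
  have bc: "b \<in> carrier R" "c \<in> carrier R" using b(1) c(2) subringE(1)[OF S] by auto
  have "c \<otimes> b \<otimes> a' \<in> S" if "a' \<in> insert a A" for a'
  proof (cases "a' = a")
    case True
    then have "c \<otimes> b \<otimes> a' = b \<otimes> (c \<otimes> a)" using bc c(1) by (simp add: m_ac)
    then show ?thesis using subringE(6)[OF S b(1) c(4)] by simp
  next
    case False
    then have "a' \<in> A" "a' \<in> carrier R" using that insert.prems by (auto simp: fractions_def)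
    then have "c \<otimes> b \<otimes> a' = c \<otimes> (b \<otimes> a')" using bc by (simp add: m_assoc)
    then show ?thesis using subringE(6)[OF S c(2)] b(3) \<open>a' \<in> A\<close> by simp
  qed
  moreover have "c \<otimes> b \<in> S - {\<zero>}" using subringE(6)[OF S c(2) b(1)] integral_iff bc b(2) c(3) by auto
  ultimately show ?case by blast
qed

lemma (in field) generate_field_insert_subset_fractions:
  assumes M: "subfield M R" and z: "z \<in> carrier R"
  shows "generate_field R (insert z M) \<subseteq> fractions (simple_extension M z)"
proof -
  have Mc: "M \<subseteq> carrier R" using subfieldE(3)[OF M] .
  have Mz: "subring (simple_extension M z) R"
    using simple_extension_is_subring[OF subfieldE(1)[OF M] z] .
  have "insert z M \<subseteq> simple_extension M z"
    using simple_extension_mem[OF subfieldE(1)[OF M] z] simple_extension_incl[OF Mc z] by blast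
  then show ?thesis
    using subset_fractions[OF Mz] Mc z
    by (intro generate_field_min_subfield1[OF _ subfield_fractions[OF Mz]]) auto
qed

lemma (in field) clear_denominators:
  assumes M: "subfield M R" and z: "z \<in> carrier R"
    and p: "set p \<subseteq> generate_field R (insert z M)"
  obtains B q where "B \<in> carrier R" "B \<noteq> \<zero>" "\<And>k. q k \<in> carrier (M[X])"
    "\<And>k. eval (q k) z = B \<otimes> coeff p k"
proof -
  have Mc: "M \<subseteq> carrier R" using subfieldE(3)[OF M] .
  let ?Mz = "simple_extension M z"
  have Mz: "subring ?Mz R" using simple_extension_is_subring[OF subfieldE(1)[OF M] z] .
  have Gz: "subring (generate_field R (insert z M)) R"
    using generate_field_is_subfield[of "insert z M"] Mc z subfieldE(1) by auto
  have "range (coeff p) \<subseteq> fractions ?Mz"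
    using coeff_in_subring[OF Gz p] generate_field_insert_subset_fractions[OF M z] by blast
  moreover have "finite (range (coeff p))" using coeff_img(3)[of p] by simp
  ultimately obtain B where B: "B \<in> ?Mz - {\<zero>}" "\<forall>a \<in> range (coeff p). B \<otimes> a \<in> ?Mz"
    using common_denominator[OF Mz] by meson
  have "\<forall>k. \<exists>q. q \<in> carrier (M[X]) \<and> eval q z = B \<otimes> coeff p k"
    using B(2) simple_extension_as_eval_img[OF Mc z] by (simp add: image_iff) metis
  then obtain q where "\<And>k. q k \<in> carrier (M[X])" "\<And>k. eval (q k) z = B \<otimes> coeff p k"
    by metis
  moreover have "B \<in> carrier R" "B \<noteq> \<zero>" using B(1) subringE(1)[OF Mz] by auto
  ultimately show thesis using that by blast
qed

lemma (in field) algebraic_exchange: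
  assumes M: "subfield M R" and x: "x \<in> carrier R" and z: "z \<in> carrier R"
    and tr: "transcendental M x" and alg: "algebraic (generate_field R (insert z M)) x"
  shows "algebraic (generate_field R (insert x M)) z"
proof -
  have Mc: "M \<subseteq> carrier R" using subfieldE(3)[OF M] .
  let ?Gz = "generate_field R (insert z M)" and ?Gx = "generate_field R (insert x M)"
  have Gz: "subring ?Gz R" using generate_field_is_subfield[of "insert z M"] Mc z subfieldE(1) by auto
  have Gx: "subring ?Gx R" using generate_field_is_subfield[of "insert x M"] Mc x subfieldE(1) by auto
  obtain p where p: "p \<in> carrier (?Gz[X])" "p \<noteq> []" "eval p x = \<zero>"
    using algebraicE[OF Gz x] alg unfolding over_def by blast
  have p_Gz: "set p \<subseteq> ?Gz" using polynomial_incl p(1) univ_poly_carrier by blast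
  have p_R: "set p \<subseteq> carrier R" using p_Gz subringE(1)[OF Gz] by blast
  obtain B q where B: "B \<in> carrier R" "B \<noteq> \<zero>" and q: "\<And>k. q k \<in> carrier (M[X])"
    "\<And>k. eval (q k) z = B \<otimes> coeff p k"
    using clear_denominators[OF M z p_Gz] by blast
  have q_M: "set (q k) \<subseteq> M" for k using polynomial_incl q(1) univ_poly_carrier by blast
  define m where "m = (\<Sum>k<length p. length (q k))"
  have q_finsum: "B \<otimes> coeff p k = (\<Oplus>j\<in>{..<m}. coeff (q k) j \<otimes> z [^] j)" if "k < length p" for k
    unfolding q(2)[symmetric] m_def using q_M Mc z that
    by (intro eval_eq_finsum_coeff) (auto intro: member_le_sum)
  have "(\<Oplus>k\<in>{..<length p}. (\<Oplus>j\<in>{..<m}. coeff (q k) j \<otimes> z [^] j) \<otimes> x [^] k)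
      = (\<Oplus>k\<in>{..<length p}. B \<otimes> (coeff p k \<otimes> x [^] k))"
    using q_finsum[symmetric] B p_R x by (intro finsum_cong') (auto simp: m_assoc)
  also have "\<dots> = B \<otimes> eval p x"
    using B p_R x by (simp add: finsum_rdistr eval_eq_finsum_coeff_length Pi_def)
  also have "\<dots> = \<zero>" using p(3) B by simp
  finally have rel: "(\<Oplus>k\<in>{..<length p}. (\<Oplus>j\<in>{..<m}. coeff (q k) j \<otimes> z [^] j) \<otimes> x [^] k) = \<zero>" .
  have "(\<Oplus>j\<in>{..<m}. coeff (q (degree p)) j \<otimes> z [^] j) = B \<otimes> lead_coeff p"
    using q_finsum[of "degree p"] lead_coeff_simp[OF p(2)] p(2) by simp
  also have "\<dots> \<noteq> \<zero>"
    using p B p_R univ_poly_carrier[of R ?Gz p] integral_iff unfolding polynomial_def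
    by (cases p) auto
  finally have "(\<Oplus>j\<in>{..<m}. coeff (q (degree p)) j \<otimes> z [^] j) \<noteq> \<zero>" .
  moreover have "degree p < length p" using p(2) by simp
  moreover have "M \<subseteq> ?Gx" "x \<in> ?Gx" by (auto intro: generate_field.incl)
  ultimately show ?thesis
    using algebraic_of_bivariate_relation[OF subfieldE(1)[OF M] Gx _ _ tr z, of "\<lambda>k j. coeff (q k) j"]
      coeff_in_subring[OF subfieldE(1)[OF M] q_M] rel by blast
qed

lemma (in field) algebraic_trans:
  assumes F: "subfield F R" and A: "subfield A R" and A_alg: "\<And>a. a \<in> A \<Longrightarrow> algebraic F a"
    and x: "x \<in> carrier R" and alg: "algebraic A x"
  shows "algebraic F x"
proof -
  obtain p where p: "p \<in> carrier (A[X])" "p \<noteq> []" "eval p x = \<zero>"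
    using algebraicE[OF subfieldE(1)[OF A] x] alg unfolding over_def by blast
  have pol: "polynomial A p" using p(1) univ_poly_carrier by blast
  have pA: "set p \<subseteq> A" using polynomial_incl[OF pol] .
  have pR: "set p \<subseteq> carrier R" using pA subfieldE(3)[OF A] by blast
  have p_alg: "(algebraic over F) a" if "a \<in> set p" for a using A_alg pA that unfolding over_def by blast
  define E where "E = finite_extension F p"
  have E: "subfield E R" "finite_dimension F E"
    unfolding E_def using finite_extension_is_subfield[OF F pR] finite_extension_finite_dimension(1)[OF F pR] p_alg
    by blast+
  have "set p \<subseteq> E" unfolding E_def using finite_extension_mem[OF subfieldE(1)[OF F] pR] .
  then have "p \<in> carrier (E[X])" using pol univ_poly_carrier unfolding polynomial_def by blast
  then have "(algebraic over E) x" using algebraicI p(2,3) by blast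
  then have "finite_dimension F (simple_extension E x)"
    using telescopic_base_dim(1)[OF F E(1,2)] finite_dimension_simple_extension[OF E(1) x] by blast
  moreover have "subring (simple_extension E x) R" "x \<in> simple_extension E x"
    using simple_extension_is_subring[OF subfieldE(1)[OF E(1)] x] simple_extension_mem[OF subfieldE(1)[OF E(1)] x]
    by auto
  ultimately show ?thesis using finite_dimension_imp_algebraic[OF F] unfolding over_def by blast
qed

lemma (in field) subfield_Union_chain:
  assumes "C \<noteq> {}" "subset.chain {F. subfield F R} C"
  shows "subfield (\<Union>C) R"
proof -
  have sf: "subfield F R" if "F \<in> C" for F using assms(2) that unfolding subset_chain_def by blast
  have common: "\<exists>F\<in>C. a \<in> F \<and> b \<in> F" if "a \<in> \<Union>C" "b \<in> \<Union>C" for a b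
  proof -
    have "finite {a, b}" "{a, b} \<subseteq> \<Union>C" using that by auto
    then obtain F where "F \<in> C" "{a, b} \<subseteq> F" using finite_subset_Union_chain assms by metis
    then show ?thesis by blast
  qed
  show ?thesis
  proof (rule subfieldI'[OF subringI])
    show "\<Union>C \<subseteq> carrier R" using sf subfieldE(3) by blast
    obtain F where "F \<in> C" using assms(1) by blast
    then show "\<one> \<in> \<Union>C" using subringE(3)[OF subfieldE(1)[OF sf]] by blast
  next
    fix h assume "h \<in> \<Union>C"
    then obtain F where F: "F \<in> C" "h \<in> F" by blast
    show "\<ominus> h \<in> \<Union>C" using subringE(5)[OF subfieldE(1)[OF sf[OF F(1)]] F(2)] F(1) by blast
  next
    fix h1 h2 assume "h1 \<in> \<Union>C" "h2 \<in> \<Union>C"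
    then obtain F where F: "F \<in> C" "h1 \<in> F" "h2 \<in> F" using common by blast
    show "h1 \<otimes> h2 \<in> \<Union>C" using subringE(6)[OF subfieldE(1)[OF sf[OF F(1)]] F(2,3)] F(1) by blast
    show "h1 \<oplus> h2 \<in> \<Union>C" using subringE(7)[OF subfieldE(1)[OF sf[OF F(1)]] F(2,3)] F(1) by blast
  next
    fix h assume "h \<in> \<Union>C - {\<zero>}"
    then obtain F where F: "F \<in> C" "h \<in> F - {\<zero>}" by blast
    show "inv h \<in> \<Union>C" using subfield_m_inv(1)[OF sf[OF F(1)] F(2)] F(1) by blast
  qed
qed

lemma (in field) transcendental_Union_chain:
  assumes "C \<noteq> {}" "subset.chain {F. subfield F R} C" and x: "x \<in> carrier R"
    and tr: "\<And>F. F \<in> C \<Longrightarrow> transcendental F x"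
  shows "transcendental (\<Union>C) x"
proof (rule ccontr)
  assume "algebraic (\<Union>C) x"
  then obtain p where p: "p \<in> carrier ((\<Union>C)[X])" "p \<noteq> []" "eval p x = \<zero>"
    using algebraicE[OF subfieldE(1)[OF subfield_Union_chain[OF assms(1,2)]] x]
    unfolding over_def by blast
  have pol: "polynomial (\<Union>C) p" using p(1) univ_poly_carrier by blast
  obtain F where F: "F \<in> C" "set p \<subseteq> F"
    using finite_subset_Union_chain[OF _ polynomial_incl[OF pol] assms(1,2)] by blast
  have "polynomial F p" using pol p(2) F(2) unfolding polynomial_def by simp
  then have "p \<in> carrier (F[X])" using univ_poly_carrier by blast
  then have "algebraic F x" using algebraicI[of p F x] p(2,3) unfolding over_def by blast
  then show False using tr[OF F(1)] by blast
qed

lemma (in field) exists_maximal_transcendental_subfield: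
  assumes K: "subfield K R" and x: "x \<in> carrier R" and tr: "transcendental K x"
  obtains M where "subfield M R" "K \<subseteq> M" "transcendental M x"
    "\<And>y. y \<in> carrier R \<Longrightarrow> y \<notin> M \<Longrightarrow> algebraic (generate_field R (insert y M)) x"
proof -
  define S where "S = {F. subfield F R \<and> K \<subseteq> F \<and> transcendental F x}"
  have "\<exists>M\<in>S. \<forall>F\<in>S. M \<subseteq> F \<longrightarrow> F = M"
  proof (rule subset_Zorn_nonempty)
    show "S \<noteq> {}" using K tr unfolding S_def by blast
  next
    fix C assume C: "C \<noteq> {}" "subset.chain S C"
    then have chain: "subset.chain {F. subfield F R} C"
      and tr_C: "\<And>F. F \<in> C \<Longrightarrow> transcendental F x" and K_C: "\<And>F. F \<in> C \<Longrightarrow> K \<subseteq> F"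
      unfolding subset_chain_def S_def by auto
    have "K \<subseteq> \<Union>C" using C(1) K_C by blast
    then show "\<Union>C \<in> S"
      unfolding S_def using subfield_Union_chain[OF C(1) chain] transcendental_Union_chain[OF C(1) chain x tr_C]
      by blast
  qed
  then obtain M where "M \<in> S" and max: "\<And>F. F \<in> S \<Longrightarrow> M \<subseteq> F \<Longrightarrow> F = M"
    by blast
  then have M: "subfield M R" "K \<subseteq> M" "transcendental M x" unfolding S_def by auto
  show thesis
  proof (rule that[OF M])
    fix y assume y: "y \<in> carrier R" "y \<notin> M"
    let ?G = "generate_field R (insert y M)"
    have "M \<subseteq> ?G" "y \<in> ?G" by (auto intro: generate_field.incl)
    moreover have "subfield ?G R" using generate_field_is_subfield subfieldE(3)[OF M(1)] y(1) by auto
    ultimately show "algebraic ?G x" using max[of ?G] M(2) y(2) unfolding S_def by auto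
  qed
qed

lemma (in field) rel_alg_closed_of_maximal_transcendental:
  assumes M: "subfield M R" and x: "x \<in> carrier R" and tr: "transcendental M x"
    and max: "\<And>y. y \<in> carrier R \<Longrightarrow> y \<notin> M \<Longrightarrow> algebraic (generate_field R (insert y M)) x"
  shows "rel_alg_closed R M"
  unfolding rel_alg_closed_def
proof (intro ballI impI)
  fix y assume y: "y \<in> carrier R" "algebraic M y"
  show "y \<in> M"
  proof (rule ccontr)
    assume "y \<notin> M"
    let ?A = "{a \<in> carrier R. algebraic M a}"
    have A: "subfield ?A R" using subfield_of_algebraics[OF M] unfolding over_def .
    have "insert y M \<subseteq> ?A"
      using y subfieldE(3)[OF M] algebraic_self[OF subfieldE(1)[OF M]] unfolding over_def by blast
    then have "generate_field R (insert y M) \<subseteq> ?A"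
      using generate_field_min_subfield1[OF _ A] y(1) subfieldE(3)[OF M] by blast
    then have "algebraic ?A x" using algebraic_mono max[OF y(1) \<open>y \<notin> M\<close>] unfolding over_def by blast
    then have "algebraic M x" using algebraic_trans[OF M A _ x] by blast
    then show False using tr by blast
  qed
qed

lemma (in field) trdeg_one_of_maximal_transcendental:
  assumes M: "subfield M R" and x: "x \<in> carrier R" and tr: "transcendental M x"
    and max: "\<And>y. y \<in> carrier R \<Longrightarrow> y \<notin> M \<Longrightarrow> algebraic (generate_field R (insert y M)) x"
  shows "trdeg_one R M"
  unfolding trdeg_one_def
proof (intro bexI[OF _ x] conjI ballI tr)
  fix z assume z: "z \<in> carrier R"
  let ?G = "generate_field R (insert x M)"
  show "algebraic ?G z"
  proof (cases "z \<in> M")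
    case True
    have "subring ?G R" using generate_field_is_subfield[of "insert x M"] subfieldE(1,3)[OF M] x subfieldE(1) by auto
    moreover have "z \<in> ?G" using True by (auto intro: generate_field.incl)
    ultimately show ?thesis using algebraic_self unfolding over_def by blast
  next
    case False
    then show ?thesis using algebraic_exchange[OF M x z tr max[OF z]] by blast
  qed
qed

lemma (in field) exists_rel_alg_closed_trdeg_one_subfield_not_mem:
  assumes K: "subfield K R" "rel_alg_closed R K" and x: "x \<in> carrier R" "x \<notin> K"
  obtains F where "subfield F R" "K \<subseteq> F" "trdeg_one R F" "rel_alg_closed R F" "x \<notin> F"
proof -
  have "transcendental K x" using K(2) x unfolding rel_alg_closed_def by blast
  then obtain M where M: "subfield M R" "K \<subseteq> M" "transcendental M x"
    and max: "\<And>y. y \<in> carrier R \<Longrightarrow> y \<notin> M \<Longrightarrow> algebraic (generate_field R (insert y M)) x"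
    using exists_maximal_transcendental_subfield[OF K(1) x(1)] by blast
  have "x \<notin> M" using M(1,3) algebraic_self[OF subfieldE(1)] unfolding over_def by blast
  then show thesis
    using that M(1,2) trdeg_one_of_maximal_transcendental[OF M(1) x(1) M(3) max]
      rel_alg_closed_of_maximal_transcendental[OF M(1) x(1) M(3) max] by blast
qed

theorem lemma3p8:
  fixes L (structure) and K :: "'a set"
  assumes "field L"
    and "subfield K L"
    and "K \<noteq> carrier L"
    and "rel_alg_closed L K"
  shows "\<Inter> {F. subfield F L \<and> K \<subseteq> F \<and> trdeg_one L F \<and> rel_alg_closed L F} = K"
proof -
  interpret field L by fact
  let ?W = "{F. subfield F L \<and> K \<subseteq> F \<and> trdeg_one L F \<and> rel_alg_closed L F}"
  have avoid: "\<exists>F\<in>?W. x \<notin> F" if "x \<in> carrier L" "x \<notin> K" for x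
    using exists_rel_alg_closed_trdeg_one_subfield_not_mem[OF assms(2,4) that] by blast
  \<comment> \<open>K \<noteq> carrier L is needed only to make W nonempty, as the intersection of no sets is UNIV\<close>
  obtain x0 where "x0 \<in> carrier L" "x0 \<notin> K" using assms(3) subfieldE(3)[OF assms(2)] by blast
  then have "\<Inter>?W \<subseteq> carrier L" using avoid subfieldE(3) by blast
  then have "\<Inter>?W \<subseteq> K" using avoid by blast
  then show ?thesis by blast
qed

end
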